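(* \[ \sum_{n=0}^\infty\frac{(20n^2-4n-1)\,n^2(2n+1)}{2n-1}\cdot\frac{(-1)^n\binom{2n}{n}^5}{2^{12n}}=-\frac{2}{\pi^2}. \] *)

theory Defs
  imports "HOL-Analysis.Analysis"
begin

end

theory Submission
  imports Defs "HOL-Real_Asymp.Real_Asymp"
begin

(* Write c n = binom(2n, n) / 4^n and a n = (-1)^n c(n)^5 / 4^n. The summand equals
   -1/4 a(n) (20n^2 + 8n + 1) + T(n+1) - T(n) with T(n) = 32 n^5 a(n) / (1 - 2n), and T(n) -> 0,
   so the theorem reduces to Guillera's formula  sum a(n) (20n^2 + 8n + 1) = 8 / pi^2.
   That formula is proved by the WZ method: with B(n,k) = a(n) (c(k) / binom(n+k, k))^4,
   G = B * (20n^2 + 8n + 1 + 24kn + 8k^2 + 4k) and F = B * 8n(2n + 4k + 1) satisfy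
   G(n,k+1) - G(n,k) = F(n+1,k) - F(n,k), so sum_n G(n,k) does not depend on k.
   As k -> infinity every term with n >= 1 tends to 0 (dominated convergence for series),
   while G(0,k) = c(k)^4 (8k^2 + 4k + 1) -> 8 / pi^2 by Wallis' product, since c(k)^2 ~ 1/(pi k). *)

section \<open>Normalised central binomial coefficients\<close>

definition central_ratio :: "nat \<Rightarrow> real" where
  "central_ratio n = real ((2 * n) choose n) / 4 ^ n"

lemma central_ratio_fact: "central_ratio n = fact (2 * n) / (4 ^ n * fact n ^ 2)"
  by (simp add: central_ratio_def binomial_fact power2_eq_square mult_2)

lemma central_ratio_0 [simp]: "central_ratio 0 = 1"
  by (simp add: central_ratio_def)

lemma central_ratio_pos: "central_ratio n > 0"
  by (simp add: central_ratio_def)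

lemma central_ratio_Suc:
  "central_ratio (Suc n) = (2 * real n + 1) / (2 * real n + 2) * central_ratio n"
proof -
  have "fact (2 * Suc n) = (2 * real n + 2) * (2 * real n + 1) * fact (2 * n)"
    by (simp add: algebra_simps)
  moreover have "fact (Suc n) = (real n + 1) * fact n" by simp
  ultimately show ?thesis
    unfolding central_ratio_fact by (simp add: divide_simps) (simp add: algebra_simps power2_eq_square)
qed

lemma central_ratio_le_1: "central_ratio n \<le> 1"
proof (induction n)
  case (Suc n)
  show ?case
    unfolding central_ratio_Suc by (rule mult_le_one) (use Suc.IH central_ratio_pos[of n] in auto)
qed simp

lemma central_ratio_wallis_product:
  "(\<Prod>k = 1..n. 4 * real k ^ 2 / (4 * real k ^ 2 - 1)) * (central_ratio n ^ 2 * (2 * real n + 1)) = 1"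
proof (induction n)
  case (Suc n)
  define W where "W = (\<Prod>k = 1..n. 4 * real k ^ 2 / (4 * real k ^ 2 - 1))"
  have "(\<Prod>k = 1..Suc n. 4 * real k ^ 2 / (4 * real k ^ 2 - 1))
      = W * (4 * real (Suc n) ^ 2 / (4 * real (Suc n) ^ 2 - 1))"
    by (simp add: W_def)
  also have "4 * real (Suc n) ^ 2 / (4 * real (Suc n) ^ 2 - 1)
      = 4 * (real n + 1) ^ 2 / ((2 * real n + 1) * (2 * real n + 3))"
    by (simp add: power2_eq_square algebra_simps)
  finally have prod_Suc: "(\<Prod>k = 1..Suc n. 4 * real k ^ 2 / (4 * real k ^ 2 - 1))
      = W * (4 * (real n + 1) ^ 2 / ((2 * real n + 1) * (2 * real n + 3)))" .
  have "2 * real (Suc n) + 1 = 2 * real n + 3" by simp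
  then have "(\<Prod>k = 1..Suc n. 4 * real k ^ 2 / (4 * real k ^ 2 - 1))
        * (central_ratio (Suc n) ^ 2 * (2 * real (Suc n) + 1))
      = W * (4 * (real n + 1) ^ 2 / ((2 * real n + 1) * (2 * real n + 3)))
        * (((2 * real n + 1) / (2 * real n + 2) * central_ratio n) ^ 2 * (2 * real n + 3))"
    by (simp only: prod_Suc central_ratio_Suc)
  also have "\<dots> = W * (central_ratio n ^ 2 * (2 * real n + 1))"
    by (simp add: power2_eq_square divide_simps) (simp add: algebra_simps)
  also have "\<dots> = 1"
    using Suc.IH by (simp add: W_def)
  finally show ?case .
qed simp

lemma central_ratio_asymptotics: "(\<lambda>n. central_ratio n ^ 2 * (2 * real n + 1)) \<longlonglongrightarrow> 2 / pi"
proof -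
  have "(\<lambda>n. inverse (\<Prod>k = 1..n. 4 * real k ^ 2 / (4 * real k ^ 2 - 1))) \<longlonglongrightarrow> inverse (pi / 2)"
    using wallis by (rule tendsto_inverse) simp
  then show ?thesis
    unfolding inverse_unique[OF central_ratio_wallis_product] by simp
qed

section \<open>The WZ pair\<close>

lemma wz_sum_independent:
  fixes F G :: "nat \<Rightarrow> nat \<Rightarrow> 'a::real_normed_vector"
  assumes wz: "\<And>n k. G n (Suc k) - G n k = F (Suc n) k - F n k"
    and summable_G: "\<And>k. summable (\<lambda>n. G n k)"
    and F_lim: "\<And>k. (\<lambda>n. F n k) \<longlonglongrightarrow> 0"
    and F_0: "\<And>k. F 0 k = 0"
  shows "(\<Sum>n. G n k) = (\<Sum>n. G n 0)"
proof (induction k)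
  case (Suc k)
  have "(\<lambda>n. G n (Suc k) - G n k) sums 0"
    using telescope_sums[OF F_lim[of k]] by (simp add: wz F_0)
  moreover have "(\<lambda>n. G n (Suc k) - G n k) sums ((\<Sum>n. G n (Suc k)) - (\<Sum>n. G n k))"
    by (intro sums_diff summable_sums summable_G)
  ultimately show ?case
    using Suc.IH sums_unique2 by fastforce
qed simp

lemma binomial_add_Suc_right:
  "real ((n + Suc k) choose Suc k) = real ((n + k) choose k) * (real n + real k + 1) / (real k + 1)"
proof -
  have "Suc k * ((n + Suc k) choose Suc k) = Suc (n + k) * ((n + k) choose k)"
    using Suc_times_binomial[of k "n + k"] by simp
  then have "(real k + 1) * real ((n + Suc k) choose Suc k) = (real n + real k + 1) * real ((n + k) choose k)"
    by (metis of_nat_mult of_nat_Suc add.commute of_nat_add)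
  then show ?thesis by (simp add: field_simps)
qed

lemma binomial_add_Suc_left:
  "real ((Suc n + k) choose k) = real ((n + k) choose k) * (real n + real k + 1) / (real n + 1)"
proof -
  have "Suc n * ((Suc n + k) choose k) = Suc (n + k) * ((n + k) choose k)"
    using binomial_absorb_comp[of "Suc n + k" k] by simp
  then have "(real n + 1) * real ((Suc n + k) choose k) = (real n + real k + 1) * real ((n + k) choose k)"
    by (metis of_nat_mult of_nat_Suc add.commute of_nat_add)
  then show ?thesis by (simp add: field_simps)
qed

lemma Suc_le_binomial_add: "1 \<le> n \<Longrightarrow> real k + 1 \<le> real ((n + k) choose k)"
  using binomial_right_mono[of "Suc k" "n + k" k] by simp

lemma central_ratio_over_binomial_Suc_right:
  "central_ratio (Suc k) / real ((n + Suc k) choose Suc k)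
     = (2 * real k + 1) / (2 * (real n + real k + 1)) * (central_ratio k / real ((n + k) choose k))"
proof -
  have "real ((n + k) choose k) > 0" by simp
  then show ?thesis
    unfolding central_ratio_Suc binomial_add_Suc_right by (simp add: divide_simps) (simp add: algebra_simps)
qed

lemma central_ratio_over_binomial_Suc_left:
  "central_ratio k / real ((Suc n + k) choose k)
      = (real n + 1) / (real n + real k + 1) * (central_ratio k / real ((n + k) choose k))"
proof -
  have "real ((n + k) choose k) > 0" by simp
  then show ?thesis
    unfolding binomial_add_Suc_left by (simp add: divide_simps)
qed

definition guillera_coeff :: "nat \<Rightarrow> real" where
  "guillera_coeff n = (-1) ^ n * central_ratio n ^ 5 / 4 ^ n"

lemma guillera_coeff_Suc:
  "guillera_coeff (Suc n) = - 1/4 * ((2 * real n + 1) / (2 * real n + 2)) ^ 5 * guillera_coeff n"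
  by (simp add: guillera_coeff_def central_ratio_Suc power_mult_distrib power_divide mult_ac)

lemma abs_guillera_coeff_le: "\<bar>guillera_coeff n\<bar> \<le> 1 / 4 ^ n"
proof -
  have "central_ratio n ^ 5 \<le> 1"
    using central_ratio_pos[of n] central_ratio_le_1[of n] by (simp add: power_le_one)
  then show ?thesis
    by (simp add: guillera_coeff_def abs_mult power_abs abs_of_pos[OF central_ratio_pos] divide_right_mono)
qed

definition guillera_kernel :: "nat \<Rightarrow> nat \<Rightarrow> real" where
  "guillera_kernel n k = guillera_coeff n * (central_ratio k / real ((n + k) choose k)) ^ 4"

lemma guillera_kernel_0_right [simp]: "guillera_kernel n 0 = guillera_coeff n"
  by (simp add: guillera_kernel_def)

lemma guillera_kernel_Suc_right:
  "16 * (real n + real k + 1) ^ 4 * guillera_kernel n (Suc k) = (2 * real k + 1) ^ 4 * guillera_kernel n k"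
proof -
  define u where "u = real n + real k + 1"
  have "guillera_kernel n (Suc k) = ((2 * real k + 1) / (2 * u)) ^ 4 * guillera_kernel n k"
    unfolding u_def guillera_kernel_def central_ratio_over_binomial_Suc_right
    by (simp add: power_mult_distrib power_divide mult_ac)
  moreover have "u > 0" by (simp add: u_def)
  ultimately show ?thesis
    unfolding u_def[symmetric] by (simp add: power_divide power_mult_distrib)
qed

lemma guillera_kernel_Suc_left:
  "128 * (real n + 1) * (real n + real k + 1) ^ 4 * guillera_kernel (Suc n) k
     = - ((2 * real n + 1) ^ 5 * guillera_kernel n k)"
proof -
  define u where "u = real n + real k + 1"
  define v where "v = real n + 1"
  define w where "w = 2 * real n + 1"
  have ratio: "guillera_kernel (Suc n) k = - 1/4 * (w / (2 * v)) ^ 5 * (v / u) ^ 4 * guillera_kernel n k"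
    unfolding u_def v_def w_def guillera_kernel_def central_ratio_over_binomial_Suc_left guillera_coeff_Suc
    by (simp add: power_mult_distrib power_divide mult_ac)
  have "u > 0" "v > 0" by (simp_all add: u_def v_def)
  then show ?thesis
    unfolding ratio u_def[symmetric] v_def[symmetric] w_def[symmetric]
    by (simp add: field_simps eval_nat_numeral)
qed

lemma guillera_wz_polynomial_identity:
  fixes n k :: "'a::comm_ring_1"
  shows "(2*k + 1)^4 * (20*n^2 + 8*n + 1 + 24*(k + 1)*n + 8*(k + 1)^2 + 4*(k + 1))
           - 16*(n + k + 1)^4 * (20*n^2 + 8*n + 1 + 24*k*n + 8*k^2 + 4*k)
         = - ((2*n + 1)^5 * (2*n + 4*k + 3)) - 16*(n + k + 1)^4 * (8*n*(2*n + 4*k + 1))"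
  by (simp add: algebra_simps eval_nat_numeral)

definition guillera_G :: "nat \<Rightarrow> nat \<Rightarrow> real" where
  "guillera_G n k = guillera_kernel n k *
     (20 * real n ^ 2 + 8 * real n + 1 + 24 * real k * real n + 8 * real k ^ 2 + 4 * real k)"

definition guillera_F :: "nat \<Rightarrow> nat \<Rightarrow> real" where
  "guillera_F n k = guillera_kernel n k * (8 * real n * (2 * real n + 4 * real k + 1))"

lemma guillera_wz_pair: "guillera_G n (Suc k) - guillera_G n k = guillera_F (Suc n) k - guillera_F n k"
proof -
  define D where "D = 16 * (real n + real k + 1) ^ 4"
  have "D * guillera_G n (Suc k) = (D * guillera_kernel n (Suc k)) *
          (20 * real n ^ 2 + 8 * real n + 1 + 24 * (real k + 1) * real n + 8 * (real k + 1) ^ 2 + 4 * (real k + 1))"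
    by (simp add: guillera_G_def algebra_simps)
  also have "D * guillera_kernel n (Suc k) = (2 * real k + 1) ^ 4 * guillera_kernel n k"
    unfolding D_def by (rule guillera_kernel_Suc_right)
  finally have G: "D * guillera_G n (Suc k) = (2 * real k + 1) ^ 4 * guillera_kernel n k *
          (20 * real n ^ 2 + 8 * real n + 1 + 24 * (real k + 1) * real n + 8 * (real k + 1) ^ 2 + 4 * (real k + 1))" .
  have "D * guillera_F (Suc n) k
      = (128 * (real n + 1) * (real n + real k + 1) ^ 4 * guillera_kernel (Suc n) k) * (2 * real n + 4 * real k + 3)"
    by (simp add: D_def guillera_F_def algebra_simps)
  also have "\<dots> = - ((2 * real n + 1) ^ 5 * guillera_kernel n k) * (2 * real n + 4 * real k + 3)"
    by (simp only: guillera_kernel_Suc_left)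
  finally have F: "D * guillera_F (Suc n) k = - ((2 * real n + 1) ^ 5 * guillera_kernel n k) * (2 * real n + 4 * real k + 3)" .
  have "D * (guillera_G n (Suc k) - guillera_G n k) = guillera_kernel n k *
      ((2 * real k + 1) ^ 4 * (20 * real n ^ 2 + 8 * real n + 1 + 24 * (real k + 1) * real n
          + 8 * (real k + 1) ^ 2 + 4 * (real k + 1))
       - 16 * (real n + real k + 1) ^ 4 * (20 * real n ^ 2 + 8 * real n + 1 + 24 * real k * real n
          + 8 * real k ^ 2 + 4 * real k))"
    unfolding right_diff_distrib G by (simp add: guillera_G_def D_def algebra_simps)
  also have "\<dots> = guillera_kernel n k * (- ((2 * real n + 1) ^ 5 * (2 * real n + 4 * real k + 3))
       - 16 * (real n + real k + 1) ^ 4 * (8 * real n * (2 * real n + 4 * real k + 1)))"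
    by (simp only: guillera_wz_polynomial_identity)
  also have "\<dots> = D * (guillera_F (Suc n) k - guillera_F n k)"
    unfolding right_diff_distrib F by (simp add: guillera_F_def D_def algebra_simps)
  finally have "D * (guillera_G n (Suc k) - guillera_G n k) = D * (guillera_F (Suc n) k - guillera_F n k)" .
  moreover have "D \<noteq> 0" by (simp add: D_def)
  ultimately show ?thesis by simp
qed

section \<open>Guillera's formula\<close>

lemma summable_square_div_power_4: "summable (\<lambda>n. (real n + 1) ^ 2 / 4 ^ n)"
proof (rule summable_comparison_test_bigo)
  show "summable (\<lambda>n. norm (1 / 2 ^ n :: real))"
    using summable_geometric[of "1/2 :: real"] by (simp add: power_one_over)
  show "(\<lambda>n. (real n + 1) ^ 2 / 4 ^ n) \<in> O(\<lambda>n. 1 / 2 ^ n)" by real_asymp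
qed

lemma abs_guillera_kernel_le:
  assumes "n \<ge> 1"
  shows "\<bar>guillera_kernel n k\<bar> \<le> 1 / (4 ^ n * (real k + 1) ^ 4)"
proof -
  have "central_ratio k / real ((n + k) choose k) \<le> 1 / (real k + 1)"
    using central_ratio_le_1[of k] Suc_le_binomial_add[OF assms, of k] central_ratio_pos[of k]
    by (intro frac_le) auto
  then have "(central_ratio k / real ((n + k) choose k)) ^ 4 \<le> (1 / (real k + 1)) ^ 4"
    using central_ratio_pos[of k] by (intro power_mono) auto
  then have "\<bar>guillera_kernel n k\<bar> \<le> 1 / 4 ^ n * (1 / (real k + 1)) ^ 4"
    unfolding guillera_kernel_def abs_mult
    by (intro mult_mono abs_guillera_coeff_le) (auto simp: power_abs abs_of_pos[OF central_ratio_pos])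
  then show ?thesis by (simp add: power_divide)
qed

lemma abs_guillera_kernel_mult_le:
  assumes "n \<ge> 1" and w: "\<bar>w\<bar> \<le> C * (real n + real k + 1) ^ 2"
  shows "\<bar>guillera_kernel n k * w\<bar> \<le> C / (real k + 1) ^ 2 * ((real n + 1) ^ 2 / 4 ^ n)"
proof -
  have "0 \<le> C * (real n + real k + 1) ^ 2"
    using w abs_ge_zero order_trans by blast
  then have "C \<ge> 0" by (simp add: zero_le_mult_iff)
  have "(real n + real k + 1) ^ 2 \<le> (real n + 1) ^ 2 * (real k + 1) ^ 2"
    by (simp add: power2_eq_square algebra_simps)
  with w \<open>C \<ge> 0\<close> have "\<bar>w\<bar> \<le> C * ((real n + 1) ^ 2 * (real k + 1) ^ 2)"
    by (meson mult_left_mono order_trans)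
  then have "\<bar>guillera_kernel n k * w\<bar>
      \<le> 1 / (4 ^ n * (real k + 1) ^ 4) * (C * ((real n + 1) ^ 2 * (real k + 1) ^ 2))"
    unfolding abs_mult using abs_guillera_kernel_le[OF \<open>n \<ge> 1\<close>] by (intro mult_mono) auto
  also have "\<dots> = C / (real k + 1) ^ 2 * ((real n + 1) ^ 2 / 4 ^ n)"
  proof -
    have "1 / (q * y ^ 4) * (C * (x * y ^ 2)) = C / y ^ 2 * (x / q)" if "y \<noteq> 0" "q \<noteq> 0" for x y q :: real
      using that by (simp add: field_simps power_numeral_reduce)
    then show ?thesis by simp
  qed
  finally show ?thesis .
qed

lemma abs_guillera_G_le:
  "n \<ge> 1 \<Longrightarrow> \<bar>guillera_G n k\<bar> \<le> 24 / (real k + 1) ^ 2 * ((real n + 1) ^ 2 / 4 ^ n)"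
  unfolding guillera_G_def
  by (rule abs_guillera_kernel_mult_le) (auto simp: power2_eq_square algebra_simps)

lemma abs_guillera_F_le:
  "n \<ge> 1 \<Longrightarrow> \<bar>guillera_F n k\<bar> \<le> 16 / (real k + 1) ^ 2 * ((real n + 1) ^ 2 / 4 ^ n)"
  unfolding guillera_F_def
  by (rule abs_guillera_kernel_mult_le) (auto simp: power2_eq_square algebra_simps)

lemma summable_guillera_G: "summable (\<lambda>n. guillera_G n k)"
  by (rule summable_comparison_test'[where N = 1,
        OF summable_mult[OF summable_square_div_power_4, where c = "24 / (real k + 1) ^ 2"]])
     (metis real_norm_def abs_guillera_G_le)

lemma guillera_F_tendsto_0: "(\<lambda>n. guillera_F n k) \<longlonglongrightarrow> 0"
proof (rule summable_LIMSEQ_zero)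
  show "summable (\<lambda>n. guillera_F n k)"
    by (rule summable_comparison_test'[where N = 1,
          OF summable_mult[OF summable_square_div_power_4, where c = "16 / (real k + 1) ^ 2"]])
       (metis real_norm_def abs_guillera_F_le)
qed

lemma guillera_G_tendsto_0:
  assumes "n \<ge> 1"
  shows "(\<lambda>k. guillera_G n k) \<longlonglongrightarrow> 0"
proof (rule Lim_null_comparison)
  show "\<forall>\<^sub>F k in sequentially. norm (guillera_G n k) \<le> 24 / (real k + 1) ^ 2 * ((real n + 1) ^ 2 / 4 ^ n)"
    using abs_guillera_G_le[OF assms] by simp
  show "(\<lambda>k. 24 / (real k + 1) ^ 2 * ((real n + 1) ^ 2 / 4 ^ n)) \<longlonglongrightarrow> 0"
    by real_asymp
qed

lemma guillera_G_0_tendsto: "(\<lambda>k. guillera_G 0 k) \<longlonglongrightarrow> 8 / pi ^ 2"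
proof -
  have "guillera_G 0 k = (central_ratio k ^ 2 * (2 * real k + 1)) ^ 2
      * ((8 * real k ^ 2 + 4 * real k + 1) / (2 * real k + 1) ^ 2)" for k
  proof -
    have "(2 * real k + 1) ^ 2 > 0" by simp
    then show ?thesis
      by (simp add: guillera_G_def guillera_kernel_def guillera_coeff_def field_simps eval_nat_numeral)
  qed
  moreover have "(\<lambda>k. (8 * real k ^ 2 + 4 * real k + 1) / (2 * real k + 1) ^ 2) \<longlonglongrightarrow> 2"
    by real_asymp
  then have "(\<lambda>k. (central_ratio k ^ 2 * (2 * real k + 1)) ^ 2
      * ((8 * real k ^ 2 + 4 * real k + 1) / (2 * real k + 1) ^ 2)) \<longlonglongrightarrow> (2 / pi) ^ 2 * 2"
    by (intro tendsto_intros central_ratio_asymptotics)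
  ultimately show ?thesis by (simp add: power2_eq_square)
qed

theorem guillera_formula:
  "(\<lambda>n. guillera_coeff n * (20 * real n ^ 2 + 8 * real n + 1)) sums (8 / pi ^ 2)"
proof -
  have independent: "(\<lambda>k. \<Sum>n. guillera_G n k) = (\<lambda>_. \<Sum>n. guillera_G n 0)"
    by (rule ext, rule wz_sum_independent[where F = guillera_F, OF guillera_wz_pair summable_guillera_G
          guillera_F_tendsto_0]) (simp add: guillera_F_def)
  have "(\<lambda>k. \<Sum>n. guillera_G n k) \<longlonglongrightarrow> (\<Sum>n. if n = 0 then 8 / pi ^ 2 else 0)"
  proof (rule tannerys_theorem[THEN conjunct2, THEN conjunct2])
    show "(\<lambda>k. guillera_G n k) \<longlonglongrightarrow> (if n = 0 then 8 / pi ^ 2 else 0)" for n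
      using guillera_G_0_tendsto guillera_G_tendsto_0[of n] by (cases "n = 0") auto
    show "\<forall>\<^sub>F (n, k) in sequentially \<times>\<^sub>F sequentially. norm (guillera_G n k) \<le> 24 * ((real n + 1) ^ 2 / 4 ^ n)"
      unfolding eventually_prod_sequentially prod.case
    proof (intro exI[of _ 1] allI impI)
      fix k n :: nat
      assume "k \<ge> 1" "n \<ge> 1"
      have "24 / (real k + 1) ^ 2 * ((real n + 1) ^ 2 / 4 ^ n) \<le> 24 * ((real n + 1) ^ 2 / 4 ^ n)"
        by (intro mult_right_mono) (simp_all add: field_simps)
      then show "norm (guillera_G n k) \<le> 24 * ((real n + 1) ^ 2 / 4 ^ n)"
        using abs_guillera_G_le[OF \<open>n \<ge> 1\<close>, of k] by simp
    qed
    show "summable (\<lambda>n. 24 * ((real n + 1) ^ 2 / 4 ^ n))"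
      by (rule summable_mult[OF summable_square_div_power_4])
  qed simp
  also have "(\<Sum>n. if n = 0 then 8 / pi ^ 2 else 0) = 8 / pi ^ 2"
    by (rule sums_unique[OF sums_single[of 0 "\<lambda>_. 8 / pi ^ 2"], symmetric])
  finally have "(\<Sum>n. guillera_G n 0) = 8 / pi ^ 2"
    unfolding independent LIMSEQ_const_iff .
  then have "(\<lambda>n. guillera_G n 0) sums (8 / pi ^ 2)"
    using summable_sums[OF summable_guillera_G[of 0]] by simp
  then show ?thesis
    by (simp add: guillera_G_def)
qed

section \<open>Telescoping to the main theorem\<close>

definition guillera_telescoper :: "nat \<Rightarrow> real" where
  "guillera_telescoper n = 32 * real n ^ 5 / (1 - 2 * real n) * guillera_coeff n"

lemma guillera_telescoper_Suc:
  "guillera_telescoper (Suc n) = (2 * real n + 1) ^ 4 / 4 * guillera_coeff n"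
proof -
  define v where "v = real n + 1"
  define w where "w = 2 * real n + 1"
  have "v > 0" "w > 0" by (simp_all add: v_def w_def)
  moreover have "guillera_telescoper (Suc n) = 32 * v ^ 5 / (- w) * (- 1/4 * (w / (2 * v)) ^ 5 * guillera_coeff n)"
    unfolding guillera_telescoper_def guillera_coeff_Suc v_def w_def by (simp add: algebra_simps)
  ultimately show ?thesis
    unfolding w_def[symmetric] by (simp add: field_simps eval_nat_numeral)
qed

lemma guillera_telescoper_tendsto_0: "guillera_telescoper \<longlonglongrightarrow> 0"
proof (rule Lim_null_comparison)
  show "\<forall>\<^sub>F n in sequentially. norm (guillera_telescoper n) \<le> 32 * real n ^ 5 * (1 / 4 ^ n)"
  proof (intro always_eventually allI)
    fix n
    have "\<bar>1 - 2 * real n\<bar> \<ge> 1" by (cases n) auto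
    then have "32 * real n ^ 5 / \<bar>1 - 2 * real n\<bar> \<le> 32 * real n ^ 5"
      by (simp add: divide_le_eq mult_le_cancel_left1)
    then show "norm (guillera_telescoper n) \<le> 32 * real n ^ 5 * (1 / 4 ^ n)"
      unfolding guillera_telescoper_def real_norm_def abs_mult abs_divide
      by (intro mult_mono abs_guillera_coeff_le) auto
  qed
  show "(\<lambda>n. 32 * real n ^ 5 * (1 / 4 ^ n)) \<longlonglongrightarrow> 0"
    by real_asymp
qed

lemma central_binomial_power_eq_guillera_coeff:
  "(-1) ^ n * real ((2 * n) choose n) ^ 5 / 2 ^ (12 * n) = guillera_coeff n"
proof -
  have "(4::real) ^ n = 2 ^ (2 * n)"
    by (simp add: power_mult)
  moreover have "(2::real) ^ (12 * n) = (2 ^ (2 * n)) ^ 5 * 2 ^ (2 * n)"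
    by (simp add: power_mult[symmetric] power_add[symmetric])
  ultimately show ?thesis
    by (simp add: guillera_coeff_def central_ratio_def power_divide)
qed

lemma summand_eq_guillera_plus_telescoping:
  "(20 * real n ^ 2 - 4 * real n - 1) * real n ^ 2 * (2 * real n + 1) / (2 * real n - 1) * guillera_coeff n
     = - 1/4 * (guillera_coeff n * (20 * real n ^ 2 + 8 * real n + 1))
       + (guillera_telescoper (Suc n) - guillera_telescoper n)"
proof -
  have "2 * real n - 1 \<noteq> 0" "1 - 2 * real n \<noteq> 0"
    by (cases n; simp) (cases n; simp)
  then show ?thesis
    unfolding guillera_telescoper_Suc unfolding guillera_telescoper_def
    by (simp add: field_simps eval_nat_numeral)
qed

theorem mainTheorem16:
  shows "(\<lambda>n::nat. ((20 * real n ^ 2 - 4 * real n - 1) * real n ^ 2 * (2 * real n + 1)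
            / (2 * real n - 1)) * ((-1) ^ n * real ((2 * n) choose n) ^ 5 / 2 ^ (12 * n)))
         sums (- 2 / pi ^ 2)"
proof -
  have "(\<lambda>n. - 1/4 * (guillera_coeff n * (20 * real n ^ 2 + 8 * real n + 1))
          + (guillera_telescoper (Suc n) - guillera_telescoper n))
        sums (- 1/4 * (8 / pi ^ 2) + (0 - guillera_telescoper 0))"
    by (intro sums_add sums_mult guillera_formula telescope_sums guillera_telescoper_tendsto_0)
  moreover have "- 1/4 * (8 / pi ^ 2) + (0 - guillera_telescoper 0) = - 2 / pi ^ 2"
    by (simp add: guillera_telescoper_def)
  ultimately show ?thesis
    by (simp only: central_binomial_power_eq_guillera_coeff summand_eq_guillera_plus_telescoping)
qed

end
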